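(* Let $X$ be a metric space and $x\in X$, and assume there exist constants $c\ge1$, $a\in(0,1]$ such that for all $r\le a$, $\lambda,\mu\le1$ and $y,z\in B_X(x,r)$, $n(\lambda\mu r,B_X(y,\lambda r))\le c\,n(\lambda\mu r,B_X(z,\lambda r))$. Let (C) denote the condition $\limsup_{r\to0}n_{\lambda r}(\overline{B}_X(x,r))<\infty$ for all $\lambda>0$. (i) If (C) holds, then $$\underline{\delta}_X(x)=\lim_{\lambda\to0}\liminf_{r\to0}\frac{\log n(\lambda r,B(x,r))}{\log1/\lambda},\qquad \overline{\delta}_X(x)=\lim_{\lambda\to0}\limsup_{r\to0}\frac{\log n(\lambda r,B(x,r))}{\log1/\lambda},$$ the limits in $\lambda$ existing. (ii) If (C) holds, then $\underline{\delta}_X(x)\le\underline{d}_X(x)\le\overline{d}_X(x)\le\overline{\delta}_X(x)$. (iii) Condition (C) is equivalent to $\overline{\delta}_X(x)<\infty$.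
   Context: $B(x,r)=B_X(x,r)$ is the open ball, $\overline{B}(x,r)$ the closed ball; $n(s,A)=n_s(A)$ is the minimum number of open balls of radius $s$ needed to cover $A$. Tangential dimensions: $\underline{\delta}_X(x)=\liminf_{\lambda\to0}\liminf_{r\to0}\frac{\log n(\lambda r,\overline{B}(x,r))}{\log1/\lambda}$, $\overline{\delta}_X(x)=\limsup_{\lambda\to0}\limsup_{r\to0}\frac{\log n(\lambda r,\overline{B}(x,r))}{\log1/\lambda}$. Local box dimensions: $\underline{d}_X(x)=\lim_{R\to0}\liminf_{r\to0}\frac{\log n(r,B_X(x,R))}{\log1/r}$, $\overline{d}_X(x)=\lim_{R\to0}\limsup_{r\to0}\frac{\log n(r,B_X(x,R))}{\log1/r}$. *)

theory Defs
  imports "HOL-Analysis.Analysis"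
begin

text \<open>Covering number n(s,A): least number of open balls of radius s (centres anywhere
  in the space) covering A; infinity if no finite cover exists.\<close>
definition covnum :: "real \<Rightarrow> 'a::metric_space set \<Rightarrow> enat" where
  "covnum s A = Inf {enat (card F) | F. finite F \<and> A \<subseteq> (\<Union>y\<in>F. ball y s)}"

definition elog :: "enat \<Rightarrow> ereal" where
  "elog n = (case n of enat k \<Rightarrow> ereal (ln (real k)) | \<infinity> \<Rightarrow> \<infinity>)"

definition lower_tangential_dim :: "'a::metric_space \<Rightarrow> ereal" where
  "lower_tangential_dim x = Liminf (at_right 0) (\<lambda>lam.
      Liminf (at_right 0) (\<lambda>r. elog (covnum (lam * r) (cball x r)) / ereal (ln (1 / lam))))"

definition upper_tangential_dim :: "'a::metric_space \<Rightarrow> ereal" where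
  "upper_tangential_dim x = Limsup (at_right 0) (\<lambda>lam.
      Limsup (at_right 0) (\<lambda>r. elog (covnum (lam * r) (cball x r)) / ereal (ln (1 / lam))))"

definition lower_box_dim :: "'a::metric_space \<Rightarrow> ereal" where
  "lower_box_dim x = Lim (at_right 0) (\<lambda>R.
      Liminf (at_right 0) (\<lambda>r. elog (covnum r (ball x R)) / ereal (ln (1 / r))))"

definition upper_box_dim :: "'a::metric_space \<Rightarrow> ereal" where
  "upper_box_dim x = Lim (at_right 0) (\<lambda>R.
      Limsup (at_right 0) (\<lambda>r. elog (covnum r (ball x R)) / ereal (ln (1 / r))))"

definition condC :: "'a::metric_space \<Rightarrow> bool" where
  "condC x \<longleftrightarrow> (\<forall>lam>0. Limsup (at_right 0) (\<lambda>r. ereal_of_enat (covnum (lam * r) (cball x r))) < \<infinity>)"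

end

theory Submission
  imports Defs "HOL-Real_Asymp.Real_Asymp"
begin

text \<open>
  Write N(s,R) for the number of s-balls needed to cover B(x,R). Covering B(x,R) by t-balls and
  comparing each of them with B(x,2t) through the homogeneity hypothesis gives
  N(s,R) <= c N(t,R) N(s,2t), while n points of B(x,R/2) at mutual distance >= 4t give
  n N(s,t) <= c N(s,R). Iterating over the scales (2 theta)^k R, a bound N(theta r, r) <= K for all
  small r yields log N(s,R) <= log(cK) (log(R/s) / log(1/(2 theta)) + 2), and a lower bound
  K <= N(8 theta r, r) yields the dual estimate. Hence a single value of the ratio
  log N(theta r, r) / log(1/theta) controls the ratios at all smaller scales, and the local box
  dimensions, up to an error that vanishes as theta tends to 0. This Fekete-type argument makes the
  lower and upper limits in lambda coincide. Closed balls lie between B(x,r) and B(x,2r), which only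
  replaces lambda by lambda/2, so the tangential dimensions are these same limits.
\<close>



abbreviation covering_exponent :: "real \<Rightarrow> real \<Rightarrow> 'a::metric_space set \<Rightarrow> ereal" where
  "covering_exponent h s A \<equiv> elog (covnum s A) / ereal (ln (1 / h))"

lemma covnum_mono: "A \<subseteq> B \<Longrightarrow> covnum s A \<le> covnum s B"
  unfolding covnum_def by (rule Inf_superset_mono) blast

lemma covnum_antimono_radius: "s \<le> t \<Longrightarrow> covnum t A \<le> covnum s A"
  unfolding covnum_def
proof (rule Inf_superset_mono, safe)
  fix F assume "s \<le> t" "finite F" "A \<subseteq> (\<Union>y\<in>F. ball y s)"
  moreover have "(\<Union>y\<in>F. ball y s) \<subseteq> (\<Union>y\<in>F. ball y t)" using \<open>s \<le> t\<close> by auto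
  ultimately show "\<exists>G. enat (card F) = enat (card G) \<and> finite G \<and> A \<subseteq> (\<Union>y\<in>G. ball y t)"
    by blast
qed

lemma covnum_le_card: "finite F \<Longrightarrow> A \<subseteq> (\<Union>y\<in>F. ball y s) \<Longrightarrow> covnum s A \<le> enat (card F)"
  unfolding covnum_def by (rule Inf_lower) blast

lemma obtain_minimal_cover:
  assumes "covnum s A = enat m"
  obtains F where "finite F" "card F = m" "A \<subseteq> (\<Union>y\<in>F. ball y s)"
proof -
  let ?S = "{enat (card F) | F. finite F \<and> A \<subseteq> (\<Union>y\<in>F. ball y s)}"
  have "?S \<noteq> {}" using assms unfolding covnum_def Inf_enat_def by (auto split: if_splits)
  then have "Inf ?S \<in> ?S" unfolding Inf_enat_def by (auto intro: LeastI)
  then show ?thesis using assms that unfolding covnum_def by auto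
qed

lemma one_le_covnum: "A \<noteq> {} \<Longrightarrow> 1 \<le> covnum s A"
  unfolding covnum_def one_enat_def
  by (rule Inf_greatest) (auto simp: Suc_le_eq card_gt_0_iff)

lemma enat_ceiling_le_covnum: "ereal K \<le> ereal_of_enat (covnum s A) \<Longrightarrow> enat (nat \<lceil>K\<rceil>) \<le> covnum s A"
  by (cases "covnum s A") (auto simp: nat_le_iff ceiling_le_iff)

lemma covnum_UN_le:
  fixes A :: "'i \<Rightarrow> 'a::metric_space set"
  assumes "finite I" "\<And>i. i \<in> I \<Longrightarrow> ereal_of_enat (covnum s (A i)) \<le> ereal M"
  shows "ereal_of_enat (covnum s (\<Union>i\<in>I. A i)) \<le> ereal (real (card I) * M)"
  using assms
proof (induction I rule: finite_induct)
  case empty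
  show ?case using covnum_le_card[of "{}" "{}::'a set" s]
    by (simp add: zero_enat_def[symmetric] zero_ereal_def[symmetric])
next
  case (insert i I)
  obtain m where m: "covnum s (A i) = enat m" "real m \<le> M"
    using insert.prems[of i] by (cases "covnum s (A i)") auto
  obtain n where n: "covnum s (\<Union>j\<in>I. A j) = enat n" "real n \<le> real (card I) * M"
    using insert.IH insert.prems by (cases "covnum s (\<Union>j\<in>I. A j)") auto
  obtain F where F: "finite F" "card F = m" "A i \<subseteq> (\<Union>y\<in>F. ball y s)"
    using obtain_minimal_cover[OF m(1)] .
  obtain G where G: "finite G" "card G = n" "(\<Union>j\<in>I. A j) \<subseteq> (\<Union>y\<in>G. ball y s)"
    using obtain_minimal_cover[OF n(1)] .
  have "covnum s (\<Union>j\<in>insert i I. A j) \<le> enat (card (F \<union> G))"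
    by (rule covnum_le_card) (use F G in auto)
  also have "\<dots> \<le> enat (m + n)" using card_Un_le[of F G] F G by simp
  finally have "ereal_of_enat (covnum s (\<Union>j\<in>insert i I. A j)) \<le> ereal (real (m + n))"
    by (metis ereal_of_enat_le_iff ereal_of_enat_simps(1))
  also have "\<dots> \<le> ereal (real (card (insert i I)) * M)"
    using m n insert.hyps by (simp add: algebra_simps)
  finally show ?case .
qed

lemma obtain_separated_subset:
  fixes B :: "'a::metric_space set"
  assumes "0 < s" "enat n \<le> covnum s B"
  obtains S where "S \<subseteq> B" "finite S" "card S = n"
    "\<And>p q. p \<in> S \<Longrightarrow> q \<in> S \<Longrightarrow> p \<noteq> q \<Longrightarrow> s \<le> dist p q"
proof -
  have "\<exists>S\<subseteq>B. finite S \<and> card S = n \<and> (\<forall>p\<in>S. \<forall>q\<in>S. p \<noteq> q \<longrightarrow> s \<le> dist p q)"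
    using assms(2)
  proof (induction n)
    case 0
    show ?case by (intro exI[of _ "{}"]) auto
  next
    case (Suc n)
    then have "enat n \<le> covnum s B"
      using Suc_n_not_le_n enat_ord_simps(1) le_cases order.trans by meson
    then obtain S where S: "S \<subseteq> B" "finite S" "card S = n"
      "\<forall>p\<in>S. \<forall>q\<in>S. p \<noteq> q \<longrightarrow> s \<le> dist p q"
      using Suc.IH by blast
    have "\<not> B \<subseteq> (\<Union>p\<in>S. ball p s)"
    proof
      assume "B \<subseteq> (\<Union>p\<in>S. ball p s)"
      then have "covnum s B \<le> enat n" using covnum_le_card[OF S(2)] S(3) by simp
      then show False using Suc.prems order_trans enat_ord_simps(1) Suc_n_not_le_n by meson
    qed
    then obtain b where "b \<in> B" "b \<notin> (\<Union>p\<in>S. ball p s)" by blast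
    then have b: "b \<in> B" "\<forall>p\<in>S. s \<le> dist p b" by (auto simp: not_less)
    then have "b \<notin> S" using assms(1) by fastforce
    then show ?case
      by (intro exI[of _ "insert b S"]) (use S b in \<open>auto simp: dist_commute\<close>)
  qed
  then show ?thesis using that by blast
qed

lemma sum_card_meeting_balls_le:
  fixes F S :: "'a::metric_space set"
  assumes "finite F" "finite S" "\<rho> \<le> t"
    and sep: "\<And>p q. p \<in> S \<Longrightarrow> q \<in> S \<Longrightarrow> p \<noteq> q \<Longrightarrow> 4*t \<le> dist p q"
  shows "(\<Sum>s\<in>S. card {w\<in>F. ball w \<rho> \<inter> ball s t \<noteq> {}}) \<le> card F"
proof -
  let ?G = "\<lambda>s. {w\<in>F. ball w \<rho> \<inter> ball s t \<noteq> {}}"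
  have disjoint: "?G s \<inter> ?G s' = {}" if "s \<in> S" "s' \<in> S" "s \<noteq> s'" for s s'
  proof (rule ccontr)
    assume "?G s \<inter> ?G s' \<noteq> {}"
    then obtain w p q where "p \<in> ball w \<rho>" "p \<in> ball s t" "q \<in> ball w \<rho>" "q \<in> ball s' t" by blast
    then have "dist s s' < 4 * t" using assms(3) unfolding mem_ball by metric
    then show False using sep[OF that] by simp
  qed
  have "(\<Sum>s\<in>S. card (?G s)) = card (\<Union>s\<in>S. ?G s)"
    by (rule card_UN_disjoint[symmetric]) (use assms(1,2) disjoint in auto)
  also have "\<dots> \<le> card F" by (rule card_mono[OF assms(1)]) auto
  finally show ?thesis .
qed

lemma elog_mono: "n \<le> m \<Longrightarrow> 1 \<le> n \<Longrightarrow> elog n \<le> elog m"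
  by (cases n; cases m) (auto simp: elog_def one_enat_def)

lemma elog_nonneg: "1 \<le> n \<Longrightarrow> 0 \<le> elog n"
  by (cases n) (auto simp: elog_def one_enat_def)

lemma elog_le_ln_iff: "1 \<le> n \<Longrightarrow> 0 < B \<Longrightarrow> elog n \<le> ereal (ln B) \<longleftrightarrow> ereal_of_enat n \<le> ereal B"
  by (cases n) (auto simp: elog_def one_enat_def)

lemma ln_le_elog_iff: "1 \<le> n \<Longrightarrow> 0 < B \<Longrightarrow> ereal (ln B) \<le> elog n \<longleftrightarrow> ereal B \<le> ereal_of_enat n"
  by (cases n) (auto simp: elog_def one_enat_def)

lemma covering_exponent_nonneg: "A \<noteq> {} \<Longrightarrow> 0 < h \<Longrightarrow> h < 1 \<Longrightarrow> 0 \<le> covering_exponent h s A"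
  using elog_nonneg[OF one_le_covnum, of A s] by (simp add: ereal_le_divide_pos)

lemma covering_exponent_mono:
  "A \<subseteq> B \<Longrightarrow> A \<noteq> {} \<Longrightarrow> 0 < h \<Longrightarrow> h < 1 \<Longrightarrow> covering_exponent h s A \<le> covering_exponent h s B"
  by (rule ereal_divide_right_mono) (auto intro!: elog_mono covnum_mono one_le_covnum)

lemma covering_exponent_change_base:
  assumes "0 < h" "h < 1" "0 < h'" "h' < 1"
  shows "covering_exponent h s A = covering_exponent h' s A * ereal (ln (1/h') / ln (1/h))"
proof (cases "elog (covnum s A)")
  case (real e)
  then show ?thesis using assms by (simp add: field_simps)
qed (use assms in simp_all)

lemma eventually_covnum_le_if_Limsup_less:
  assumes "Limsup F (\<lambda>r. covering_exponent h (s r) (A r)) < ereal y" "0 < h" "h < 1"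
    and "\<forall>\<^sub>F r in F. A r \<noteq> {}"
  shows "\<forall>\<^sub>F r in F. ereal_of_enat (covnum (s r) (A r)) \<le> ereal (exp (y * ln (1/h)))"
  using Limsup_lessD[OF assms(1)] assms(4)
proof (rule eventually_mono[OF eventually_conj])
  fix r assume r: "covering_exponent h (s r) (A r) < ereal y \<and> A r \<noteq> {}"
  then have "elog (covnum (s r) (A r)) \<le> ereal (ln (exp (y * ln (1/h))))"
    using assms(2,3) by (subst (asm) ereal_divide_less_pos) (auto simp: mult.commute)
  then show "ereal_of_enat (covnum (s r) (A r)) \<le> ereal (exp (y * ln (1/h)))"
    using r by (subst (asm) elog_le_ln_iff) (auto intro: one_le_covnum)
qed

lemma eventually_le_covnum_if_less_Liminf:
  assumes "ereal y < Liminf F (\<lambda>r. covering_exponent h (s r) (A r))" "0 < h" "h < 1"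
    and "\<forall>\<^sub>F r in F. A r \<noteq> {}"
  shows "\<forall>\<^sub>F r in F. ereal (exp (y * ln (1/h))) \<le> ereal_of_enat (covnum (s r) (A r))"
  using less_LiminfD[OF assms(1)] assms(4)
proof (rule eventually_mono[OF eventually_conj])
  fix r assume r: "ereal y < covering_exponent h (s r) (A r) \<and> A r \<noteq> {}"
  then have "ereal (ln (exp (y * ln (1/h)))) \<le> elog (covnum (s r) (A r))"
    using assms(2,3) by (subst (asm) ereal_less_divide_pos) (auto simp: mult.commute)
  then show "ereal (exp (y * ln (1/h))) \<le> ereal_of_enat (covnum (s r) (A r))"
    using r by (subst (asm) ln_le_elog_iff) (auto intro: one_le_covnum)
qed

lemma frequently_less_if_Liminf_less:
  fixes f :: "'a \<Rightarrow> 'b::complete_linorder"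
  assumes "Liminf F f < C"
  shows "\<exists>\<^sub>F t in F. f t < C"
proof (rule ccontr)
  assume "\<not> (\<exists>\<^sub>F t in F. f t < C)"
  then have "C \<le> Liminf F f" by (intro Liminf_bounded) (simp add: not_frequently not_less)
  then show False using assms by simp
qed

lemma frequently_greater_if_less_Limsup:
  fixes f :: "'a \<Rightarrow> 'b::complete_linorder"
  assumes "C < Limsup F f"
  shows "\<exists>\<^sub>F t in F. C < f t"
proof (rule ccontr)
  assume "\<not> (\<exists>\<^sub>F t in F. C < f t)"
  then have "Limsup F f \<le> C" by (intro Limsup_bounded) (simp add: not_frequently not_less)
  then show False using assms by simp
qed

lemma le_limit_if_frequently_le:
  fixes h :: "'a \<Rightarrow> real"
  assumes "\<exists>\<^sub>F t in F. C \<le> ereal (h t)" "(h \<longlongrightarrow> y) F"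
  shows "C \<le> ereal y"
proof (rule ccontr)
  assume "\<not> C \<le> ereal y"
  then obtain z where "y < z" "ereal z < C" using ereal_dense2[of "ereal y" C] by (auto simp: not_le)
  have "\<forall>\<^sub>F t in F. h t < z" using order_tendstoD(2)[OF assms(2) \<open>y < z\<close>] .
  then have "\<forall>\<^sub>F t in F. ereal (h t) < C"
    by (rule eventually_mono) (rule order.strict_trans[OF _ \<open>ereal z < C\<close>], simp)
  then show False using assms(1) by (simp add: frequently_def eventually_mono not_le)
qed

lemma limit_le_if_frequently_le:
  fixes h :: "'a \<Rightarrow> real"
  assumes "\<exists>\<^sub>F t in F. ereal (h t) \<le> C" "(h \<longlongrightarrow> y) F"
  shows "ereal y \<le> C"
proof (rule ccontr)
  assume "\<not> ereal y \<le> C"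
  then obtain z where "C < ereal z" "z < y" using ereal_dense2[of C "ereal y"] by (auto simp: not_le)
  have "\<forall>\<^sub>F t in F. z < h t" using order_tendstoD(1)[OF assms(2) \<open>z < y\<close>] .
  then have "\<forall>\<^sub>F t in F. C < ereal (h t)"
    by (rule eventually_mono) (rule order.strict_trans[OF \<open>C < ereal z\<close>], simp)
  then show False using assms(1) by (simp add: frequently_def eventually_mono not_le)
qed

lemma ereal_le_if_le_all_greater: "(\<And>y. x < ereal y \<Longrightarrow> z \<le> ereal y) \<Longrightarrow> z \<le> (x::ereal)"
  by (metis ereal_dense2 leD le_less_linear)

lemma ereal_ge_if_ge_all_less: "(\<And>y. ereal y < x \<Longrightarrow> ereal y \<le> z) \<Longrightarrow> x \<le> (z::ereal)"
  by (metis ereal_dense2 leD le_less_linear)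

lemma Limsup_le_if_eventually_le_ln_error:
  fixes h :: "real \<Rightarrow> ereal"
  assumes "\<forall>\<^sub>F s in at_right 0. h s \<le> ereal (\<alpha> + \<beta> / ln (1/s))"
  shows "Limsup (at_right 0) h \<le> ereal \<alpha>"
proof -
  have "((\<lambda>s. ereal (\<alpha> + \<beta> / ln (1/s))) \<longlongrightarrow> ereal \<alpha>) (at_right 0)"
    by (rule tendsto_ereal) real_asymp
  then have "Limsup (at_right 0) (\<lambda>s. ereal (\<alpha> + \<beta> / ln (1/s))) = ereal \<alpha>"
    by (intro lim_imp_Limsup) simp_all
  then show ?thesis using Limsup_mono[OF assms] by simp
qed

lemma Liminf_ge_if_eventually_ge_ln_error:
  fixes h :: "real \<Rightarrow> ereal"
  assumes "\<forall>\<^sub>F s in at_right 0. ereal (\<alpha> - \<beta> / ln (1/s)) \<le> h s"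
  shows "ereal \<alpha> \<le> Liminf (at_right 0) h"
proof -
  have "((\<lambda>s. ereal (\<alpha> - \<beta> / ln (1/s))) \<longlongrightarrow> ereal \<alpha>) (at_right 0)"
    by (rule tendsto_ereal) real_asymp
  then have "Liminf (at_right 0) (\<lambda>s. ereal (\<alpha> - \<beta> / ln (1/s))) = ereal \<alpha>"
    by (intro lim_imp_Liminf) simp_all
  then show ?thesis using Liminf_mono[OF assms] by simp
qed

lemma covering_exponents_le_if_elog_le:
  fixes x :: "'a::metric_space"
  assumes "0 < r0" "0 \<le> \<alpha>"
    and bound: "\<And>\<rho> R. 0 < \<rho> \<Longrightarrow> \<rho> \<le> R \<Longrightarrow> R \<le> r0 \<Longrightarrow>
      elog (covnum \<rho> (ball x R)) \<le> ereal (\<alpha> * ln (R/\<rho>) + \<beta>)"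
  shows "Limsup (at_right 0) (\<lambda>lam. Limsup (at_right 0) (\<lambda>r. covering_exponent lam (lam*r) (ball x r)))
      \<le> ereal \<alpha>"
    and "\<forall>\<^sub>F R in at_right 0. Limsup (at_right 0) (\<lambda>r. covering_exponent r r (ball x R)) \<le> ereal \<alpha>"
proof -
  have quotient: "e / ereal L \<le> ereal (\<alpha> + \<beta> / L)" if "0 < L" "e \<le> ereal (\<alpha> * L + \<beta>)" for e L
  proof -
    have "ereal (\<alpha> * L + \<beta>) = ereal L * ereal (\<alpha> + \<beta> / L)" using that by (simp add: field_simps)
    then show ?thesis using that by (subst ereal_divide_le_pos) auto
  qed
  show "Limsup (at_right 0) (\<lambda>lam. Limsup (at_right 0) (\<lambda>r. covering_exponent lam (lam*r) (ball x r)))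
      \<le> ereal \<alpha>"
  proof (rule Limsup_le_if_eventually_le_ln_error, rule eventually_at_rightI)
    fix lam :: real assume lam: "lam \<in> {0<..<1}"
    have "covering_exponent lam (lam*r) (ball x r) \<le> ereal (\<alpha> + \<beta> / ln (1/lam))" if "r \<in> {0<..<r0}" for r
    proof (rule quotient)
      show "elog (covnum (lam*r) (ball x r)) \<le> ereal (\<alpha> * ln (1/lam) + \<beta>)"
        using bound[of "lam*r" r] lam that by (simp add: mult_left_le_one_le)
    qed (use lam in simp)
    then show "Limsup (at_right 0) (\<lambda>r. covering_exponent lam (lam*r) (ball x r)) \<le> ereal (\<alpha> + \<beta> / ln (1/lam))"
      by (intro Limsup_bounded eventually_at_rightI[OF _ \<open>0 < r0\<close>])
  qed simp
  show "\<forall>\<^sub>F R in at_right 0. Limsup (at_right 0) (\<lambda>r. covering_exponent r r (ball x R)) \<le> ereal \<alpha>"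
  proof (rule eventually_at_rightI)
    fix R assume R: "R \<in> {0<..<min r0 1}"
    have "covering_exponent r r (ball x R) \<le> ereal (\<alpha> + \<beta> / ln (1/r))" if r: "r \<in> {0<..<R}" for r
    proof (rule quotient)
      have "\<alpha> * ln (R/r) \<le> \<alpha> * ln (1/r)"
        using R r \<open>0 \<le> \<alpha>\<close> by (intro mult_left_mono) (auto simp: divide_right_mono)
      then show "elog (covnum r (ball x R)) \<le> ereal (\<alpha> * ln (1/r) + \<beta>)"
        using bound[of r R] R r by (auto intro: order_trans)
    qed (use R r in simp)
    then show "Limsup (at_right 0) (\<lambda>r. covering_exponent r r (ball x R)) \<le> ereal \<alpha>"
      by (intro Limsup_le_if_eventually_le_ln_error eventually_at_rightI[of 0 R]) (use R in auto)
  qed (use \<open>0 < r0\<close> in simp)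
qed

lemma covering_exponents_ge_if_elog_ge:
  fixes x :: "'a::metric_space"
  assumes "0 < r0"
    and bound: "\<And>\<rho> R. 0 < \<rho> \<Longrightarrow> \<rho> \<le> R \<Longrightarrow> R \<le> r0 \<Longrightarrow>
      ereal (\<alpha> * ln (R/\<rho>) - \<beta>) \<le> elog (covnum \<rho> (ball x R))"
  shows "ereal \<alpha>
      \<le> Liminf (at_right 0) (\<lambda>lam. Liminf (at_right 0) (\<lambda>r. covering_exponent lam (lam*r) (ball x r)))"
    and "\<forall>\<^sub>F R in at_right 0. ereal \<alpha> \<le> Liminf (at_right 0) (\<lambda>r. covering_exponent r r (ball x R))"
proof -
  have quotient: "ereal (\<alpha> - \<beta>' / L) \<le> e / ereal L" if "0 < L" "ereal (\<alpha> * L - \<beta>') \<le> e" for e L \<beta>'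
  proof -
    have "ereal (\<alpha> * L - \<beta>') = ereal L * ereal (\<alpha> - \<beta>' / L)" using that by (simp add: field_simps)
    then show ?thesis using that by (subst ereal_le_divide_pos) auto
  qed
  show "ereal \<alpha>
      \<le> Liminf (at_right 0) (\<lambda>lam. Liminf (at_right 0) (\<lambda>r. covering_exponent lam (lam*r) (ball x r)))"
  proof (rule Liminf_ge_if_eventually_ge_ln_error, rule eventually_at_rightI)
    fix lam :: real assume lam: "lam \<in> {0<..<1}"
    have "ereal (\<alpha> - \<beta> / ln (1/lam)) \<le> covering_exponent lam (lam*r) (ball x r)" if "r \<in> {0<..<r0}" for r
    proof (rule quotient)
      show "ereal (\<alpha> * ln (1/lam) - \<beta>) \<le> elog (covnum (lam*r) (ball x r))"
        using bound[of "lam*r" r] lam that by (simp add: mult_left_le_one_le)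
    qed (use lam in simp)
    then show "ereal (\<alpha> - \<beta> / ln (1/lam)) \<le> Liminf (at_right 0) (\<lambda>r. covering_exponent lam (lam*r) (ball x r))"
      by (intro Liminf_bounded eventually_at_rightI[OF _ \<open>0 < r0\<close>])
  qed simp
  show "\<forall>\<^sub>F R in at_right 0. ereal \<alpha> \<le> Liminf (at_right 0) (\<lambda>r. covering_exponent r r (ball x R))"
  proof (rule eventually_at_rightI)
    fix R assume R: "R \<in> {0<..<min r0 1}"
    have "ereal (\<alpha> - (\<beta> + \<alpha> * ln (1/R)) / ln (1/r)) \<le> covering_exponent r r (ball x R)"
      if r: "r \<in> {0<..<R}" for r
    proof (rule quotient)
      have eq: "\<alpha> * ln (1/r) - (\<beta> + \<alpha> * ln (1/R)) = \<alpha> * ln (R/r) - \<beta>"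
        using R r by (simp add: ln_div algebra_simps)
      show "ereal (\<alpha> * ln (1/r) - (\<beta> + \<alpha> * ln (1/R))) \<le> elog (covnum r (ball x R))"
        unfolding eq using bound[of r R] R r by simp
    qed (use R r in simp)
    then show "ereal \<alpha> \<le> Liminf (at_right 0) (\<lambda>r. covering_exponent r r (ball x R))"
      by (intro Liminf_ge_if_eventually_ge_ln_error eventually_at_rightI[of 0 R]) (use R in auto)
  qed (use \<open>0 < r0\<close> in simp)
qed

lemma tendsto_at_right_0_mono:
  fixes g :: "real \<Rightarrow> ereal"
  assumes mono: "\<And>s t. 0 < s \<Longrightarrow> s \<le> t \<Longrightarrow> g s \<le> g t"
  shows "(g \<longlongrightarrow> (INF t\<in>{0<..}. g t)) (at_right 0)"
proof (rule order_tendstoI)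
  fix y assume y: "y < (INF t\<in>{0<..}. g t)"
  have "y < g t" if "0 < t" for t
    using y INF_lower[of t "{0<..}" g] that by (simp add: less_le_trans)
  then show "\<forall>\<^sub>F t in at_right 0. y < g t" by (intro eventually_at_rightI[of 0 1]) auto
next
  fix y assume "(INF t\<in>{0<..}. g t) < y"
  then obtain t0 where t0: "0 < t0" "g t0 < y" by (auto simp: INF_less_iff)
  have "g t < y" if "0 < t" "t < t0" for t using mono[of t t0] that t0 by simp
  then show "\<forall>\<^sub>F t in at_right 0. g t < y"
    by (intro eventually_at_rightI[of 0 t0]) (use t0 in auto)
qed

lemma box_dim_tendsto:
  fixes x :: "'a::metric_space"
  shows "((\<lambda>R. Liminf (at_right 0) (\<lambda>r. covering_exponent r r (ball x R))) \<longlongrightarrow> lower_box_dim x) (at_right 0)"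
    and "((\<lambda>R. Limsup (at_right 0) (\<lambda>r. covering_exponent r r (ball x R))) \<longlongrightarrow> upper_box_dim x) (at_right 0)"
proof -
  have mono: "\<forall>\<^sub>F r in at_right 0. covering_exponent r r (ball x s) \<le> covering_exponent r r (ball x t)"
    if "0 < s" "s \<le> t" for s t
    by (rule eventually_at_rightI[of 0 1]) (use that in \<open>auto intro!: covering_exponent_mono\<close>)
  have "((\<lambda>R. Liminf (at_right 0) (\<lambda>r. covering_exponent r r (ball x R))) \<longlongrightarrow>
      (INF t\<in>{0<..}. Liminf (at_right 0) (\<lambda>r. covering_exponent r r (ball x t)))) (at_right 0)"
    by (rule tendsto_at_right_0_mono) (rule Liminf_mono[OF mono])
  then show "((\<lambda>R. Liminf (at_right 0) (\<lambda>r. covering_exponent r r (ball x R))) \<longlongrightarrow> lower_box_dim x) (at_right 0)"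
    unfolding lower_box_dim_def by (simp add: tendsto_Lim)
  have "((\<lambda>R. Limsup (at_right 0) (\<lambda>r. covering_exponent r r (ball x R))) \<longlongrightarrow>
      (INF t\<in>{0<..}. Limsup (at_right 0) (\<lambda>r. covering_exponent r r (ball x t)))) (at_right 0)"
    by (rule tendsto_at_right_0_mono) (rule Limsup_mono[OF mono])
  then show "((\<lambda>R. Limsup (at_right 0) (\<lambda>r. covering_exponent r r (ball x R))) \<longlongrightarrow> upper_box_dim x) (at_right 0)"
    unfolding upper_box_dim_def by (simp add: tendsto_Lim)
qed

lemma lower_box_dim_le_upper_box_dim:
  fixes x :: "'a::metric_space"
  shows "lower_box_dim x \<le> upper_box_dim x"
  by (rule tendsto_le[OF trivial_limit_at_right_real box_dim_tendsto(2) box_dim_tendsto(1)])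
     (simp add: Liminf_le_Limsup)

lemma covering_exponent_cball_le:
  fixes x :: "'a::metric_space"
  assumes "0 < lam" "lam < 1" "0 < r"
  shows "covering_exponent lam (lam*r) (cball x r)
    \<le> covering_exponent (lam/2) (lam/2 * (2*r)) (ball x (2*r)) * ereal (ln (2/lam) / ln (1/lam))"
proof -
  have "covering_exponent lam (lam*r) (cball x r) \<le> covering_exponent lam (lam*r) (ball x (2*r))"
    by (rule covering_exponent_mono) (use assms in auto)
  also have "\<dots> = covering_exponent (lam/2) (lam*r) (ball x (2*r)) * ereal (ln (2/lam) / ln (1/lam))"
    using covering_exponent_change_base[of lam "lam/2" "lam*r" "ball x (2*r)"] assms by simp
  finally show ?thesis by simp
qed

lemma covering_exponent_cball_between:
  fixes x :: "'a::metric_space"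
  assumes "0 < lam" "lam < 1"
  defines "k \<equiv> ereal (ln (2/lam) / ln (1/lam))"
  shows "Liminf (at_right 0) (\<lambda>r. covering_exponent lam (lam*r) (ball x r))
      \<le> Liminf (at_right 0) (\<lambda>r. covering_exponent lam (lam*r) (cball x r))"
    and "Liminf (at_right 0) (\<lambda>r. covering_exponent lam (lam*r) (cball x r))
      \<le> Liminf (at_right 0) (\<lambda>r. covering_exponent (lam/2) (lam/2*r) (ball x r)) * k"
    and "Limsup (at_right 0) (\<lambda>r. covering_exponent lam (lam*r) (ball x r))
      \<le> Limsup (at_right 0) (\<lambda>r. covering_exponent lam (lam*r) (cball x r))"
    and "Limsup (at_right 0) (\<lambda>r. covering_exponent lam (lam*r) (cball x r))
      \<le> Limsup (at_right 0) (\<lambda>r. covering_exponent (lam/2) (lam/2*r) (ball x r)) * k"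
proof -
  let ?g = "\<lambda>r. covering_exponent (lam/2) (lam/2*r) (ball x r) * k"
  have k: "0 \<le> ln (2/lam) / ln (1/lam)" using assms by (simp add: divide_nonneg_pos)
  have scale: "filtermap ((*) 2) (at_right 0) = at_right (0::real)"
    using filtermap_times_pos_at_right[of "2::real" 0] by simp
  have ball: "\<forall>\<^sub>F r in at_right 0. covering_exponent lam (lam*r) (ball x r)
      \<le> covering_exponent lam (lam*r) (cball x r)"
    by (rule eventually_at_rightI[of 0 1]) (use assms in \<open>auto intro!: covering_exponent_mono\<close>)
  have cball: "\<forall>\<^sub>F r in at_right 0. covering_exponent lam (lam*r) (cball x r) \<le> ?g (2*r)"
    by (rule eventually_at_rightI[of 0 1])
       (use assms covering_exponent_cball_le[of lam _ x] in \<open>auto simp: k_def\<close>)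
  show "Liminf (at_right 0) (\<lambda>r. covering_exponent lam (lam*r) (ball x r))
      \<le> Liminf (at_right 0) (\<lambda>r. covering_exponent lam (lam*r) (cball x r))"
    by (rule Liminf_mono[OF ball])
  have "Liminf (at_right 0) (\<lambda>r. covering_exponent lam (lam*r) (cball x r))
      \<le> Liminf (at_right 0) (\<lambda>r. ?g (2*r))" by (rule Liminf_mono[OF cball])
  also have "\<dots> = Liminf (at_right 0) ?g"
    using Liminf_filtermap_eq[of "(*) (2::real)" "at_right 0" ?g] scale by (simp add: inj_on_def)
  also have "\<dots> = Liminf (at_right 0) (\<lambda>r. covering_exponent (lam/2) (lam/2*r) (ball x r)) * k"
    unfolding k_def by (rule Liminf_ereal_mult_right[OF _ k]) simp
  finally show "Liminf (at_right 0) (\<lambda>r. covering_exponent lam (lam*r) (cball x r))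
      \<le> Liminf (at_right 0) (\<lambda>r. covering_exponent (lam/2) (lam/2*r) (ball x r)) * k" .
  show "Limsup (at_right 0) (\<lambda>r. covering_exponent lam (lam*r) (ball x r))
      \<le> Limsup (at_right 0) (\<lambda>r. covering_exponent lam (lam*r) (cball x r))"
    by (rule Limsup_mono[OF ball])
  have "Limsup (at_right 0) (\<lambda>r. covering_exponent lam (lam*r) (cball x r))
      \<le> Limsup (at_right 0) (\<lambda>r. ?g (2*r))" by (rule Limsup_mono[OF cball])
  also have "\<dots> = Limsup (at_right 0) ?g"
    using Limsup_filtermap_eq[of "(*) (2::real)" "at_right 0" ?g] scale by (simp add: inj_on_def)
  also have "\<dots> = Limsup (at_right 0) (\<lambda>r. covering_exponent (lam/2) (lam/2*r) (ball x r)) * k"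
    unfolding k_def by (rule Limsup_ereal_mult_right[OF _ k]) simp
  finally show "Limsup (at_right 0) (\<lambda>r. covering_exponent lam (lam*r) (cball x r))
      \<le> Limsup (at_right 0) (\<lambda>r. covering_exponent (lam/2) (lam/2*r) (ball x r)) * k" .
qed

lemma tendsto_squeeze_half:
  fixes f g :: "real \<Rightarrow> ereal"
  assumes "(f \<longlongrightarrow> L) (at_right 0)" "\<forall>\<^sub>F lam in at_right 0. f lam \<le> g lam"
    and "\<forall>\<^sub>F lam in at_right 0. g lam \<le> f (lam/2) * ereal (ln (2/lam) / ln (1/lam))"
  shows "(g \<longlongrightarrow> L) (at_right 0)"
proof (rule tendsto_sandwich[OF assms(2,3) assms(1)])
  have "((\<lambda>lam. f (lam/2)) \<longlongrightarrow> L) (at_right 0)"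
    by (rule filterlim_compose[OF assms(1)]) real_asymp
  moreover have "((\<lambda>lam. ereal (ln (2/lam) / ln (1/lam))) \<longlongrightarrow> ereal 1) (at_right 0)"
    by (rule tendsto_ereal) real_asymp
  ultimately have "((\<lambda>lam. f (lam/2) * ereal (ln (2/lam) / ln (1/lam))) \<longlongrightarrow> L * ereal 1) (at_right 0)"
    by (rule tendsto_mult_ereal) simp
  then show "((\<lambda>lam. f (lam/2) * ereal (ln (2/lam) / ln (1/lam))) \<longlongrightarrow> L) (at_right 0)" by simp
qed

lemma condC_if_upper_tangential_dim_finite:
  fixes x :: "'a::metric_space"
  assumes "upper_tangential_dim x < \<infinity>"
  shows "condC x"
proof -
  have "upper_tangential_dim x \<noteq> \<infinity>" using assms by simp
  then obtain B :: nat where "upper_tangential_dim x < ereal B" by (auto simp: less_PInf_Ex_of_nat)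
  then have small: "\<forall>\<^sub>F lam in at_right 0.
      Limsup (at_right 0) (\<lambda>r. covering_exponent lam (lam*r) (cball x r)) < ereal B"
    unfolding upper_tangential_dim_def by (rule Limsup_lessD)
  show "condC x" unfolding condC_def
  proof (intro allI impI)
    fix lam0 :: real assume "0 < lam0"
    have "\<forall>\<^sub>F lam in at_right 0. lam \<in> {0<..<min lam0 1}"
      by (rule eventually_at_rightI[of 0 "min lam0 1"]) (use \<open>0 < lam0\<close> in auto)
    then have "\<forall>\<^sub>F lam in at_right 0. lam \<in> {0<..<min lam0 1}
        \<and> Limsup (at_right 0) (\<lambda>r. covering_exponent lam (lam*r) (cball x r)) < ereal B"
      using small by (rule eventually_conj)
    then obtain lam where "lam \<in> {0<..<min lam0 1}"
      and less: "Limsup (at_right 0) (\<lambda>r. covering_exponent lam (lam*r) (cball x r)) < ereal B"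
      using eventually_happens'[OF trivial_limit_at_right_real] by blast
    then have lam: "0 < lam" "lam < lam0" "lam < 1" by auto
    have "\<forall>\<^sub>F r in at_right 0. r \<in> {0<..<1::real}" by (rule eventually_at_rightI) auto
    moreover have "\<forall>\<^sub>F r in at_right 0.
        ereal_of_enat (covnum (lam*r) (cball x r)) \<le> ereal (exp (B * ln (1/lam)))"
      by (rule eventually_covnum_le_if_Limsup_less[OF less])
         (use lam in \<open>auto intro: eventually_at_rightI[of 0 1]\<close>)
    ultimately have "\<forall>\<^sub>F r in at_right 0.
        ereal_of_enat (covnum (lam0*r) (cball x r)) \<le> ereal (exp (B * ln (1/lam)))"
    proof (eventually_elim)
      case (elim r)
      then have "covnum (lam0*r) (cball x r) \<le> covnum (lam*r) (cball x r)"
        using lam by (intro covnum_antimono_radius) simp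
      then show ?case using elim(2) by (meson ereal_of_enat_le_iff order_trans)
    qed
    then have "Limsup (at_right 0) (\<lambda>r. ereal_of_enat (covnum (lam0*r) (cball x r)))
        \<le> ereal (exp (B * ln (1/lam)))" by (rule Limsup_bounded)
    then show "Limsup (at_right 0) (\<lambda>r. ereal_of_enat (covnum (lam0*r) (cball x r))) < \<infinity>"
      by (rule le_less_trans) simp
  qed
qed

locale covering_homogeneous =
  fixes x :: "'a::metric_space" and c a :: real
  assumes c_ge_1: "1 \<le> c" and a_pos: "0 < a"
    and homogeneous: "\<And>r lam mu y z. 0 < r \<Longrightarrow> r \<le> a \<Longrightarrow> 0 < lam \<Longrightarrow> lam \<le> 1 \<Longrightarrow>
       0 < mu \<Longrightarrow> mu \<le> 1 \<Longrightarrow> y \<in> ball x r \<Longrightarrow> z \<in> ball x r \<Longrightarrow>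
       ereal_of_enat (covnum (lam * mu * r) (ball y (lam * r)))
         \<le> ereal c * ereal_of_enat (covnum (lam * mu * r) (ball z (lam * r)))"
begin

lemma covnum_ball_le_homogeneous:
  assumes "0 < \<rho>" "\<rho> \<le> s" "s \<le> R" "R \<le> a" "y \<in> ball x R" "z \<in> ball x R"
  shows "ereal_of_enat (covnum \<rho> (ball y s)) \<le> ereal c * ereal_of_enat (covnum \<rho> (ball z s))"
proof -
  have "(s / R) * (\<rho> / s) * R = \<rho>" "(s / R) * R = s" using assms by auto
  then show ?thesis using homogeneous[of R "s/R" "\<rho>/s" y z] assms by auto
qed

lemma covnum_ball_meeting_le:
  assumes "0 < \<rho>" "\<rho> \<le> t" "2 * t \<le> R" "R \<le> a" "ball w t \<inter> ball x R \<noteq> {}"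
  shows "ereal_of_enat (covnum \<rho> (ball w t)) \<le> ereal c * ereal_of_enat (covnum \<rho> (ball x (2*t)))"
proof -
  obtain y where y: "y \<in> ball w t" "y \<in> ball x R" using assms(5) by blast
  have "ball w t \<subseteq> ball y (2*t)" using y(1) unfolding subset_iff mem_ball by metric
  then have "ereal_of_enat (covnum \<rho> (ball w t)) \<le> ereal_of_enat (covnum \<rho> (ball y (2*t)))"
    by (simp add: covnum_mono)
  also have "\<dots> \<le> ereal c * ereal_of_enat (covnum \<rho> (ball x (2*t)))"
    by (rule covnum_ball_le_homogeneous[of \<rho> "2*t" R]) (use assms y in auto)
  finally show ?thesis .
qed

lemma covnum_ball_le_mult:
  assumes "0 < \<rho>" "\<rho> \<le> t" "2 * t \<le> R" "R \<le> a"
  shows "ereal_of_enat (covnum \<rho> (ball x R))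
    \<le> ereal c * ereal_of_enat (covnum t (ball x R)) * ereal_of_enat (covnum \<rho> (ball x (2*t)))"
proof -
  have "1 \<le> covnum \<rho> (ball x (2*t))" using assms by (intro one_le_covnum) auto
  then have small_pos: "0 < ereal_of_enat (covnum \<rho> (ball x (2*t)))"
    by (cases "covnum \<rho> (ball x (2*t))") (auto simp: one_enat_def)
  show ?thesis
  proof (cases "covnum t (ball x R)")
    case infinity
    have "ereal c * ereal_of_enat (covnum t (ball x R)) = \<infinity>" using infinity c_ge_1 by simp
    then show ?thesis using small_pos by (cases "ereal_of_enat (covnum \<rho> (ball x (2*t)))") auto
  next
    case (enat m)
    obtain F where F: "finite F" "card F = m" "ball x R \<subseteq> (\<Union>w\<in>F. ball w t)"
      using obtain_minimal_cover[OF enat] .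
    define F' where "F' = {w\<in>F. ball w t \<inter> ball x R \<noteq> {}}"
    have "finite F'" "card F' \<le> m" using F card_mono[of F F'] unfolding F'_def by auto
    have cover: "ball x R \<subseteq> (\<Union>w\<in>F'. ball w t)" using F(3) unfolding F'_def by blast
    have each: "ereal_of_enat (covnum \<rho> (ball w t)) \<le> ereal c * ereal_of_enat (covnum \<rho> (ball x (2*t)))"
      if "w \<in> F'" for w
      by (rule covnum_ball_meeting_le) (use assms that in \<open>auto simp: F'_def\<close>)
    show ?thesis
    proof (cases "covnum \<rho> (ball x (2*t))")
      case infinity
      have "0 < m" using one_le_covnum[of "ball x R" t] enat assms by (simp add: one_enat_def)
      then show ?thesis using infinity enat c_ge_1 by simp
    next
      case (enat p)
      have "ereal_of_enat (covnum \<rho> (ball x R)) \<le> ereal_of_enat (covnum \<rho> (\<Union>w\<in>F'. ball w t))"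
        using cover by (simp add: covnum_mono)
      also have "\<dots> \<le> ereal (real (card F') * (c * p))"
        by (rule covnum_UN_le) (use \<open>finite F'\<close> each enat in auto)
      also have "\<dots> \<le> ereal (c * m * p)"
        using \<open>card F' \<le> m\<close> c_ge_1 by (simp add: mult_right_mono)
      finally show ?thesis using \<open>covnum t (ball x R) = enat m\<close> enat by simp
    qed
  qed
qed

lemma card_mult_covnum_ball_le:
  assumes "0 < \<rho>" "\<rho> \<le> t" "2 * t \<le> R" "R \<le> a" "enat n \<le> covnum (4*t) (ball x (R/2))"
  shows "ereal (real n) * ereal_of_enat (covnum \<rho> (ball x t)) \<le> ereal c * ereal_of_enat (covnum \<rho> (ball x R))"
proof (cases "n = 0 \<or> covnum \<rho> (ball x R) = \<infinity>")
  case True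
  then show ?thesis using c_ge_1 by (auto simp: ereal_of_enat_nonneg zero_ereal_def[symmetric])
next
  case False
  then obtain m where "n \<noteq> 0" and m: "covnum \<rho> (ball x R) = enat m" by auto
  obtain F where F: "finite F" "card F = m" "ball x R \<subseteq> (\<Union>w\<in>F. ball w \<rho>)"
    using obtain_minimal_cover[OF m] .
  obtain S where S: "S \<subseteq> ball x (R/2)" "finite S" "card S = n"
    and sep: "\<And>p q. p \<in> S \<Longrightarrow> q \<in> S \<Longrightarrow> p \<noteq> q \<Longrightarrow> 4*t \<le> dist p q"
    using obtain_separated_subset[OF _ assms(5)] assms by auto
  define G where "G s = {w\<in>F. ball w \<rho> \<inter> ball s t \<noteq> {}}" for s
  have "finite (G s)" for s using F(1) unfolding G_def by auto
  have sum_le: "(\<Sum>s\<in>S. card (G s)) \<le> m"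
    using sum_card_meeting_balls_le[OF F(1) S(2) assms(2) sep] F(2) unfolding G_def by simp
  have each: "ereal_of_enat (covnum \<rho> (ball x t)) \<le> ereal (c * card (G s))" if "s \<in> S" for s
  proof -
    have "ball s t \<subseteq> (\<Union>w\<in>G s. ball w \<rho>)"
    proof
      fix p assume p: "p \<in> ball s t"
      have "dist x s < R/2" using S(1) that by auto
      then have "p \<in> ball x R" using p assms(3) unfolding mem_ball by metric
      then obtain w where "w \<in> F" "p \<in> ball w \<rho>" using F(3) by auto
      then show "p \<in> (\<Union>w\<in>G s. ball w \<rho>)" using p unfolding G_def by blast
    qed
    then have "covnum \<rho> (ball s t) \<le> enat (card (G s))" by (rule covnum_le_card[OF \<open>finite (G s)\<close>])
    then have "ereal_of_enat (covnum \<rho> (ball s t)) \<le> ereal (card (G s))"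
      by (metis ereal_of_enat_le_iff ereal_of_enat_simps(1))
    have "ereal_of_enat (covnum \<rho> (ball x t)) \<le> ereal c * ereal_of_enat (covnum \<rho> (ball s t))"
      by (rule covnum_ball_le_homogeneous[of \<rho> t R]) (use assms that S(1) in auto)
    also have "\<dots> \<le> ereal c * ereal (card (G s))"
      using \<open>ereal_of_enat (covnum \<rho> (ball s t)) \<le> ereal (card (G s))\<close> c_ge_1
      by (intro ereal_mult_left_mono) simp_all
    finally show ?thesis by simp
  qed
  obtain s0 where "s0 \<in> S" using \<open>n \<noteq> 0\<close> S(3) by fastforce
  then obtain k where k: "covnum \<rho> (ball x t) = enat k" using each[of s0] by (cases "covnum \<rho> (ball x t)") auto
  have "real n * real k = (\<Sum>s\<in>S. real k)" using S(3) by simp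
  also have "\<dots> \<le> (\<Sum>s\<in>S. c * real (card (G s)))" using each k by (intro sum_mono) simp
  also have "\<dots> = c * real (\<Sum>s\<in>S. card (G s))" by (simp add: sum_distrib_left)
  also have "\<dots> \<le> c * real m"
    using sum_le c_ge_1 by (intro mult_left_mono) (use of_nat_le_iff in blast, simp)
  finally show ?thesis using k m by simp
qed

lemma covnum_ball_le_power:
  assumes \<theta>: "0 < \<theta>" "\<theta> \<le> 1/4" and "r0 \<le> a" and K: "1 \<le> K"
    and bound: "\<And>r. 0 < r \<Longrightarrow> r \<le> r0 \<Longrightarrow> ereal_of_enat (covnum (\<theta> * r) (ball x r)) \<le> ereal K"
    and "0 < R" "R \<le> r0" "\<theta> * (2*\<theta>)^k * R \<le> \<rho>"
  shows "ereal_of_enat (covnum \<rho> (ball x R)) \<le> ereal ((c*K)^(k+1))"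
proof -
  have "1 * 1 \<le> c * K" using c_ge_1 K by (intro mult_mono) auto
  then have cK: "1 \<le> c * K" by simp
  have coarse: "ereal_of_enat (covnum \<rho> (ball x R)) \<le> ereal ((c*K)^(k+1))"
    if "0 < R" "R \<le> r0" "\<theta> * R \<le> \<rho>" for R \<rho> k
  proof -
    have "ereal_of_enat (covnum \<rho> (ball x R)) \<le> ereal_of_enat (covnum (\<theta> * R) (ball x R))"
      using covnum_antimono_radius[OF that(3)] by simp
    also have "\<dots> \<le> ereal K" using bound that by simp
    also have "\<dots> \<le> ereal ((c*K)^1)" using c_ge_1 K by simp
    also have "\<dots> \<le> ereal ((c*K)^(k+1))" using power_increasing[of 1 "k+1" "c*K"] cK by simp
    finally show ?thesis .
  qed
  show ?thesis using \<open>0 < R\<close> \<open>R \<le> r0\<close> \<open>\<theta> * (2*\<theta>)^k * R \<le> \<rho>\<close>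
  proof (induction k arbitrary: R \<rho>)
    case 0
    then show ?case using coarse[of R \<rho> 0] by simp
  next
    case (Suc k)
    show ?case
    proof (cases "\<theta> * R \<le> \<rho>")
      case True
      then show ?thesis using coarse Suc.prems by blast
    next
      case False
      have "0 < \<theta> * (2*\<theta>)^Suc k * R" using \<theta> Suc.prems by simp
      then have "0 < \<rho>" using Suc.prems by linarith
      have "2 * \<theta> * R \<le> 1 * R" using \<theta> Suc.prems by (intro mult_right_mono) auto
      then have halved: "2 * (\<theta> * R) \<le> R" by simp
      then have "2 * (\<theta> * R) \<le> r0" using Suc.prems by linarith
      have "ereal_of_enat (covnum \<rho> (ball x R))
        \<le> ereal c * ereal_of_enat (covnum (\<theta> * R) (ball x R)) * ereal_of_enat (covnum \<rho> (ball x (2*(\<theta>*R))))"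
        by (rule covnum_ball_le_mult) (use \<open>0 < \<rho>\<close> False halved Suc.prems \<open>r0 \<le> a\<close> in auto)
      also have "\<dots> \<le> ereal (c * K) * ereal ((c*K)^(k+1))"
      proof (rule ereal_mult_mono)
        show "ereal c * ereal_of_enat (covnum (\<theta> * R) (ball x R)) \<le> ereal (c * K)"
          using ereal_mult_left_mono[OF bound[OF Suc.prems(1,2)], of "ereal c"] c_ge_1 by simp
        show "ereal_of_enat (covnum \<rho> (ball x (2*(\<theta>*R)))) \<le> ereal ((c*K)^(k+1))"
          by (rule Suc.IH) (use \<theta> Suc.prems \<open>2 * (\<theta> * R) \<le> r0\<close> in \<open>auto simp: algebra_simps\<close>)
      qed (use cK in \<open>auto simp: ereal_of_enat_nonneg\<close>)
      finally show ?thesis by simp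
    qed
  qed
qed

lemma covnum_ball_ge_power:
  assumes \<theta>: "0 < \<theta>" "\<theta> \<le> 1/8" and "r0 \<le> a" and K: "0 \<le> K"
    and bound: "\<And>r. 0 < r \<Longrightarrow> r \<le> r0 \<Longrightarrow> ereal K \<le> ereal_of_enat (covnum (8 * \<theta> * r) (ball x r))"
    and "0 < R" "R \<le> r0" "0 < \<rho>" "\<rho> \<le> \<theta>^k * R"
  shows "ereal ((K/c)^k) \<le> ereal_of_enat (covnum \<rho> (ball x R))"
  using \<open>0 < R\<close> \<open>R \<le> r0\<close> \<open>\<rho> \<le> \<theta>^k * R\<close>
proof (induction k arbitrary: R)
  case 0
  have "1 \<le> covnum \<rho> (ball x R)" using 0 by (intro one_le_covnum) auto
  then show ?case by (cases "covnum \<rho> (ball x R)") (auto simp: one_enat_def)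
next
  case (Suc k)
  have "\<theta>^k \<le> 1" using \<theta> by (intro power_le_one) auto
  then have "\<theta>^Suc k * R \<le> \<theta> * R" using \<theta> Suc.prems by (intro mult_right_mono) (auto simp: mult_left_le)
  then have "\<rho> \<le> \<theta> * R" using Suc.prems by linarith
  have "\<theta> * R \<le> r0" using mult_left_le_one_le[of R \<theta>] \<theta> Suc.prems by linarith
  define n where "n = nat \<lceil>K\<rceil>"
  have "K \<le> real n" unfolding n_def by linarith
  have "enat n \<le> covnum (8 * \<theta> * (R/2)) (ball x (R/2))"
    unfolding n_def by (rule enat_ceiling_le_covnum, rule bound) (use Suc.prems in auto)
  then have "ereal (real n) * ereal_of_enat (covnum \<rho> (ball x (\<theta> * R)))
      \<le> ereal c * ereal_of_enat (covnum \<rho> (ball x R))"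
    by (intro card_mult_covnum_ball_le) (use \<theta> Suc.prems \<open>0 < \<rho>\<close> \<open>\<rho> \<le> \<theta> * R\<close> \<open>r0 \<le> a\<close> in
        \<open>auto simp: algebra_simps\<close>)
  moreover have "ereal ((K/c)^k) \<le> ereal_of_enat (covnum \<rho> (ball x (\<theta> * R)))"
    by (rule Suc.IH) (use \<theta> Suc.prems \<open>\<theta> * R \<le> r0\<close> in \<open>auto simp: algebra_simps\<close>)
  moreover have "covnum \<rho> (ball x (\<theta> * R)) \<le> covnum \<rho> (ball x R)"
    by (intro covnum_mono subset_ball) (use mult_left_le_one_le[of R \<theta>] \<theta> Suc.prems in auto)
  ultimately show ?case
  proof (cases "covnum \<rho> (ball x R)")
    case (enat m)
    assume pack: "ereal (real n) * ereal_of_enat (covnum \<rho> (ball x (\<theta> * R))) \<le> ereal c * ereal_of_enat (covnum \<rho> (ball x R))"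
      and IH: "ereal ((K/c)^k) \<le> ereal_of_enat (covnum \<rho> (ball x (\<theta> * R)))"
      and "covnum \<rho> (ball x (\<theta> * R)) \<le> covnum \<rho> (ball x R)"
    then obtain m' where m': "covnum \<rho> (ball x (\<theta> * R)) = enat m'" using enat by (cases "covnum \<rho> (ball x (\<theta> * R))") auto
    have "(K/c)^Suc k = (K/c) * (K/c)^k" by simp
    also have "\<dots> \<le> (real n / c) * real m'"
      using IH m' K c_ge_1 \<open>K \<le> real n\<close> by (intro mult_mono) (auto simp: divide_right_mono)
    also have "\<dots> \<le> real m" using pack enat m' c_ge_1 by (simp add: field_simps)
    finally show ?thesis using enat by simp
  qed simp
qed

lemma elog_covnum_ball_upper:
  assumes \<theta>: "0 < \<theta>" "\<theta> \<le> 1/4" and "r0 \<le> a" and K: "1 \<le> K"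
    and bound: "\<And>r. 0 < r \<Longrightarrow> r \<le> r0 \<Longrightarrow> ereal_of_enat (covnum (\<theta> * r) (ball x r)) \<le> ereal K"
    and \<rho>: "0 < \<rho>" "\<rho> \<le> R" "R \<le> r0"
  shows "elog (covnum \<rho> (ball x R)) \<le> ereal (ln (c*K) / ln (1/(2*\<theta>)) * ln (R/\<rho>) + 2 * ln (c*K))"
proof -
  define L where "L = ln (1/(2*\<theta>))"
  have "0 < L" unfolding L_def using \<theta> by simp
  have "1 * 1 \<le> c * K" using c_ge_1 K by (intro mult_mono) auto
  then have cK: "1 \<le> c * K" by simp
  define k where "k = nat \<lceil>ln (R/\<rho>) / L\<rceil>"
  have "0 \<le> ln (R/\<rho>)" using \<rho> by simp
  then have k: "ln (R/\<rho>) / L \<le> real k" "real k \<le> ln (R/\<rho>) / L + 1"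
    unfolding k_def using \<open>0 < L\<close> by (simp_all add: divide_nonneg_pos)
  have "ln ((2*\<theta>)^k) = - (real k * L)" unfolding L_def using \<theta> by (subst ln_realpow) (auto simp: ln_div)
  also have "\<dots> \<le> ln (\<rho>/R)" using k \<open>0 < L\<close> \<rho> by (simp add: field_simps ln_div)
  finally have "(2*\<theta>)^k \<le> \<rho>/R" using \<theta> \<rho> by simp
  then have "\<theta> * (2*\<theta>)^k * R \<le> 1 * (2*\<theta>)^k * R" using \<theta> \<rho> by (intro mult_right_mono) auto
  also have "\<dots> \<le> \<rho>" using \<open>(2*\<theta>)^k \<le> \<rho>/R\<close> \<rho> by (simp add: field_simps)
  finally have "ereal_of_enat (covnum \<rho> (ball x R)) \<le> ereal ((c*K)^(k+1))"
    by (intro covnum_ball_le_power[OF \<theta> \<open>r0 \<le> a\<close> K bound]) (use \<rho> in auto)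
  then have "elog (covnum \<rho> (ball x R)) \<le> ereal (ln ((c*K)^(k+1)))"
    using cK \<rho> by (subst elog_le_ln_iff) (auto intro: one_le_covnum)
  also have "ln ((c*K)^(k+1)) = (real k + 1) * ln (c*K)" by (subst ln_realpow) (use cK in auto)
  also have "\<dots> \<le> (ln (R/\<rho>) / L + 2) * ln (c*K)" using k cK by (intro mult_right_mono) auto
  also have "\<dots> = ln (c*K) / L * ln (R/\<rho>) + 2 * ln (c*K)" by (simp add: algebra_simps)
  finally show ?thesis unfolding L_def by simp
qed

lemma elog_covnum_ball_lower:
  assumes \<theta>: "0 < \<theta>" "\<theta> \<le> 1/8" and "r0 \<le> a" and K: "0 < K"
    and bound: "\<And>r. 0 < r \<Longrightarrow> r \<le> r0 \<Longrightarrow> ereal K \<le> ereal_of_enat (covnum (8 * \<theta> * r) (ball x r))"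
    and \<rho>: "0 < \<rho>" "\<rho> \<le> R" "R \<le> r0"
  shows "ereal (ln (K/c) / ln (1/\<theta>) * ln (R/\<rho>) - \<bar>ln (K/c)\<bar>) \<le> elog (covnum \<rho> (ball x R))"
  \<comment> \<open>the error term covers both signs of ln (K/c), so K < c is allowed\<close>
proof -
  define L where "L = ln (1/\<theta>)"
  have "0 < L" unfolding L_def using \<theta> by simp
  define q where "q = ln (R/\<rho>) / L"
  have "0 \<le> q" unfolding q_def using \<rho> \<open>0 < L\<close> by simp
  define k where "k = nat \<lfloor>q\<rfloor>"
  have k: "real k \<le> q" "q - 1 \<le> real k" unfolding k_def using \<open>0 \<le> q\<close> by linarith+
  have "ln (\<rho>/R) = - (q * L)" unfolding q_def using \<rho> \<open>0 < L\<close> by (simp add: ln_div)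
  also have "\<dots> \<le> - (real k * L)" using k \<open>0 < L\<close> by simp
  also have "\<dots> = ln (\<theta>^k)" unfolding L_def using \<theta> by (subst ln_realpow) (auto simp: ln_div)
  finally have "\<rho> \<le> \<theta>^k * R" using \<theta> \<rho> by (simp add: field_simps)
  then have "ereal ((K/c)^k) \<le> ereal_of_enat (covnum \<rho> (ball x R))"
    by (intro covnum_ball_ge_power[OF \<theta> \<open>r0 \<le> a\<close> _ bound]) (use K \<rho> in auto)
  moreover have "0 < K/c" using K c_ge_1 by simp
  ultimately have "ereal (ln ((K/c)^k)) \<le> elog (covnum \<rho> (ball x R))"
    using \<rho> by (subst ln_le_elog_iff) (auto intro: one_le_covnum)
  moreover have "\<bar>(real k - q) * ln (K/c)\<bar> \<le> \<bar>ln (K/c)\<bar>"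
    using k by (simp add: abs_mult mult_left_le_one_le)
  then have "ln (K/c) / L * ln (R/\<rho>) - \<bar>ln (K/c)\<bar> \<le> ln ((K/c)^k)"
    using \<open>0 < K/c\<close> unfolding q_def by (simp add: ln_realpow abs_le_iff algebra_simps)
  ultimately show ?thesis unfolding L_def by (meson ereal_less_eq(3) order_trans)
qed

lemma tangential_Limsup_le_at:
  assumes \<theta>: "0 < \<theta>" "\<theta> \<le> 1/4"
    and less: "Limsup (at_right 0) (\<lambda>r. covering_exponent \<theta> (\<theta>*r) (ball x r)) < ereal y"
  defines "\<alpha> \<equiv> (ln c + y * ln (1/\<theta>)) / ln (1/(2*\<theta>))"
  shows "Limsup (at_right 0) (\<lambda>lam. Limsup (at_right 0) (\<lambda>r. covering_exponent lam (lam*r) (ball x r)))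
      \<le> ereal \<alpha>"
    and "upper_box_dim x \<le> ereal \<alpha>"
proof -
  have "0 \<le> Limsup (at_right 0) (\<lambda>r. covering_exponent \<theta> (\<theta>*r) (ball x r))"
    by (intro le_Limsup eventually_at_rightI[of 0 1]) (use \<theta> in \<open>auto intro!: covering_exponent_nonneg\<close>)
  then have "0 < ereal y" using less by (rule le_less_trans)
  then have "0 < y" by simp
  define K where "K = exp (y * ln (1/\<theta>))"
  have K: "1 \<le> K" unfolding K_def using \<open>0 < y\<close> \<theta> by simp
  have "\<forall>\<^sub>F r in at_right 0. ereal_of_enat (covnum (\<theta>*r) (ball x r)) \<le> ereal K"
    unfolding K_def
    by (rule eventually_covnum_le_if_Limsup_less[OF less])
       (use \<theta> in \<open>auto intro: eventually_at_rightI[of 0 1]\<close>)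
  then obtain b where "0 < b"
    and b: "\<And>r. 0 < r \<Longrightarrow> r < b \<Longrightarrow> ereal_of_enat (covnum (\<theta>*r) (ball x r)) \<le> ereal K"
    unfolding eventually_at_right_field by auto
  define r0 where "r0 = min a (b/2)"
  have r0: "0 < r0" "r0 \<le> a" unfolding r0_def using a_pos \<open>0 < b\<close> by auto
  have bound: "ereal_of_enat (covnum (\<theta>*r) (ball x r)) \<le> ereal K" if "0 < r" "r \<le> r0" for r
    using b that unfolding r0_def by auto
  have "ln (c*K) = ln c + y * ln (1/\<theta>)" unfolding K_def using c_ge_1 by (simp add: ln_mult)
  then have \<alpha>_eq: "\<alpha> = ln (c*K) / ln (1/(2*\<theta>))" unfolding \<alpha>_def by simp
  have "0 \<le> \<alpha>" unfolding \<alpha>_def using c_ge_1 \<open>0 < y\<close> \<theta> by (simp add: divide_nonneg_pos)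
  have log_bound: "elog (covnum \<rho> (ball x R)) \<le> ereal (\<alpha> * ln (R/\<rho>) + 2 * ln (c*K))"
    if "0 < \<rho>" "\<rho> \<le> R" "R \<le> r0" for \<rho> R
    using elog_covnum_ball_upper[OF \<theta> \<open>r0 \<le> a\<close> K bound that] unfolding \<alpha>_eq .
  show "Limsup (at_right 0) (\<lambda>lam. Limsup (at_right 0) (\<lambda>r. covering_exponent lam (lam*r) (ball x r)))
      \<le> ereal \<alpha>"
    by (rule covering_exponents_le_if_elog_le(1)[OF \<open>0 < r0\<close> \<open>0 \<le> \<alpha>\<close> log_bound])
  have "\<forall>\<^sub>F R in at_right 0. Limsup (at_right 0) (\<lambda>r. covering_exponent r r (ball x R)) \<le> ereal \<alpha>"
    by (rule covering_exponents_le_if_elog_le(2)[OF \<open>0 < r0\<close> \<open>0 \<le> \<alpha>\<close> log_bound])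
  then show "upper_box_dim x \<le> ereal \<alpha>"
    by (rule tendsto_upperbound[OF box_dim_tendsto(2)]) (rule trivial_limit_at_right_real)
qed

lemma tangential_Liminf_ge_at:
  assumes \<theta>: "0 < \<theta>" "\<theta> < 1"
    and greater: "ereal y < Liminf (at_right 0) (\<lambda>r. covering_exponent \<theta> (\<theta>*r) (ball x r))"
  defines "\<alpha> \<equiv> (y * ln (1/\<theta>) - ln c) / ln (1/(\<theta>/8))"
  shows "ereal \<alpha>
      \<le> Liminf (at_right 0) (\<lambda>lam. Liminf (at_right 0) (\<lambda>r. covering_exponent lam (lam*r) (ball x r)))"
    and "ereal \<alpha> \<le> lower_box_dim x"
proof -
  define K where "K = exp (y * ln (1/\<theta>))"
  have "\<forall>\<^sub>F r in at_right 0. ereal K \<le> ereal_of_enat (covnum (\<theta>*r) (ball x r))"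
    unfolding K_def
    by (rule eventually_le_covnum_if_less_Liminf[OF greater])
       (use \<theta> in \<open>auto intro: eventually_at_rightI[of 0 1]\<close>)
  then obtain b where "0 < b"
    and b: "\<And>r. 0 < r \<Longrightarrow> r < b \<Longrightarrow> ereal K \<le> ereal_of_enat (covnum (\<theta>*r) (ball x r))"
    unfolding eventually_at_right_field by auto
  define r0 where "r0 = min a (b/2)"
  have r0: "0 < r0" "r0 \<le> a" unfolding r0_def using a_pos \<open>0 < b\<close> by auto
  have bound: "ereal K \<le> ereal_of_enat (covnum (8 * (\<theta>/8) * r) (ball x r))" if "0 < r" "r \<le> r0" for r
    using b that unfolding r0_def by auto
  have "0 < \<theta>/8" "\<theta>/8 \<le> 1/8" "0 < K" using \<theta> unfolding K_def by auto
  have "ln (K/c) = y * ln (1/\<theta>) - ln c" unfolding K_def using c_ge_1 by (simp add: ln_div)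
  then have \<alpha>_eq: "\<alpha> = ln (K/c) / ln (1/(\<theta>/8))" unfolding \<alpha>_def by simp
  have log_bound: "ereal (\<alpha> * ln (R/\<rho>) - \<bar>ln (K/c)\<bar>) \<le> elog (covnum \<rho> (ball x R))"
    if "0 < \<rho>" "\<rho> \<le> R" "R \<le> r0" for \<rho> R
    using elog_covnum_ball_lower[OF \<open>0 < \<theta>/8\<close> \<open>\<theta>/8 \<le> 1/8\<close> \<open>r0 \<le> a\<close> \<open>0 < K\<close> bound that]
    unfolding \<alpha>_eq .
  show "ereal \<alpha>
      \<le> Liminf (at_right 0) (\<lambda>lam. Liminf (at_right 0) (\<lambda>r. covering_exponent lam (lam*r) (ball x r)))"
    by (rule covering_exponents_ge_if_elog_ge(1)[OF \<open>0 < r0\<close> log_bound])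
  have "\<forall>\<^sub>F R in at_right 0. ereal \<alpha> \<le> Liminf (at_right 0) (\<lambda>r. covering_exponent r r (ball x R))"
    by (rule covering_exponents_ge_if_elog_ge(2)[OF \<open>0 < r0\<close> log_bound])
  then show "ereal \<alpha> \<le> lower_box_dim x"
    by (rule tendsto_lowerbound[OF box_dim_tendsto(1)]) (rule trivial_limit_at_right_real)
qed

lemma tangential_Limsup_le:
  assumes "Liminf (at_right 0) (\<lambda>\<theta>. Limsup (at_right 0) (\<lambda>r. covering_exponent \<theta> (\<theta>*r) (ball x r)))
    < ereal y"
  shows "Limsup (at_right 0) (\<lambda>lam. Limsup (at_right 0) (\<lambda>r. covering_exponent lam (lam*r) (ball x r)))
      \<le> ereal y"
    and "upper_box_dim x \<le> ereal y"
proof -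
  let ?\<alpha> = "\<lambda>\<theta>. (ln c + y * ln (1/\<theta>)) / ln (1/(2*\<theta>))"
  have lim: "(?\<alpha> \<longlongrightarrow> y) (at_right 0)" by real_asymp
  have "\<forall>\<^sub>F \<theta> in at_right 0. \<theta> \<in> {0<..<1/4::real}" by (rule eventually_at_rightI[of 0 "1/4"]) auto
  with frequently_less_if_Liminf_less[OF assms]
  have "\<exists>\<^sub>F \<theta> in at_right 0. \<theta> \<in> {0<..<1/4}
      \<and> Limsup (at_right 0) (\<lambda>r. covering_exponent \<theta> (\<theta>*r) (ball x r)) < ereal y"
    by (rule frequently_eventually_conj)
  then have freq: "\<exists>\<^sub>F \<theta> in at_right 0.
      Limsup (at_right 0) (\<lambda>lam. Limsup (at_right 0) (\<lambda>r. covering_exponent lam (lam*r) (ball x r)))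
        \<le> ereal (?\<alpha> \<theta>) \<and> upper_box_dim x \<le> ereal (?\<alpha> \<theta>)"
    by (rule frequently_elim1) (intro conjI tangential_Limsup_le_at; auto)
  show "Limsup (at_right 0) (\<lambda>lam. Limsup (at_right 0) (\<lambda>r. covering_exponent lam (lam*r) (ball x r)))
      \<le> ereal y"
    by (rule le_limit_if_frequently_le[OF frequently_elim1[OF freq] lim]) blast
  show "upper_box_dim x \<le> ereal y"
    by (rule le_limit_if_frequently_le[OF frequently_elim1[OF freq] lim]) blast
qed

lemma tangential_Liminf_ge:
  assumes "ereal y < Limsup (at_right 0) (\<lambda>\<theta>. Liminf (at_right 0) (\<lambda>r. covering_exponent \<theta> (\<theta>*r) (ball x r)))"
  shows "ereal y
      \<le> Liminf (at_right 0) (\<lambda>lam. Liminf (at_right 0) (\<lambda>r. covering_exponent lam (lam*r) (ball x r)))"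
    and "ereal y \<le> lower_box_dim x"
proof -
  let ?\<alpha> = "\<lambda>\<theta>. (y * ln (1/\<theta>) - ln c) / ln (1/(\<theta>/8))"
  have lim: "(?\<alpha> \<longlongrightarrow> y) (at_right 0)" by real_asymp
  have "\<forall>\<^sub>F \<theta> in at_right 0. \<theta> \<in> {0<..<1::real}" by (rule eventually_at_rightI[of 0 1]) auto
  with frequently_greater_if_less_Limsup[OF assms]
  have "\<exists>\<^sub>F \<theta> in at_right 0. \<theta> \<in> {0<..<1}
      \<and> ereal y < Liminf (at_right 0) (\<lambda>r. covering_exponent \<theta> (\<theta>*r) (ball x r))"
    by (rule frequently_eventually_conj)
  then have freq: "\<exists>\<^sub>F \<theta> in at_right 0.
      ereal (?\<alpha> \<theta>)
        \<le> Liminf (at_right 0) (\<lambda>lam. Liminf (at_right 0) (\<lambda>r. covering_exponent lam (lam*r) (ball x r)))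
      \<and> ereal (?\<alpha> \<theta>) \<le> lower_box_dim x"
    by (rule frequently_elim1) (intro conjI tangential_Liminf_ge_at; auto)
  show "ereal y
      \<le> Liminf (at_right 0) (\<lambda>lam. Liminf (at_right 0) (\<lambda>r. covering_exponent lam (lam*r) (ball x r)))"
    by (rule limit_le_if_frequently_le[OF frequently_elim1[OF freq] lim]) blast
  show "ereal y \<le> lower_box_dim x"
    by (rule limit_le_if_frequently_le[OF frequently_elim1[OF freq] lim]) blast
qed

theorem tangential_dimensions:
  shows "((\<lambda>lam. Liminf (at_right 0) (\<lambda>r. covering_exponent lam (lam*r) (ball x r)))
      \<longlongrightarrow> lower_tangential_dim x) (at_right 0)"
    and "((\<lambda>lam. Limsup (at_right 0) (\<lambda>r. covering_exponent lam (lam*r) (ball x r)))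
      \<longlongrightarrow> upper_tangential_dim x) (at_right 0)"
    and "lower_tangential_dim x \<le> lower_box_dim x"
    and "upper_box_dim x \<le> upper_tangential_dim x"
proof -
  define fl where "fl lam = Liminf (at_right 0) (\<lambda>r. covering_exponent lam (lam*r) (ball x r))" for lam
  define fu where "fu lam = Limsup (at_right 0) (\<lambda>r. covering_exponent lam (lam*r) (ball x r))" for lam
  define gl where "gl lam = Liminf (at_right 0) (\<lambda>r. covering_exponent lam (lam*r) (cball x r))" for lam
  define gu where "gu lam = Limsup (at_right 0) (\<lambda>r. covering_exponent lam (lam*r) (cball x r))" for lam
  have between: "\<forall>\<^sub>F lam in at_right 0.
      (fl lam \<le> gl lam \<and> gl lam \<le> fl (lam/2) * ereal (ln (2/lam) / ln (1/lam)))
    \<and> (fu lam \<le> gu lam \<and> gu lam \<le> fu (lam/2) * ereal (ln (2/lam) / ln (1/lam)))"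
    unfolding fl_def fu_def gl_def gu_def
    by (intro eventually_at_rightI[of 0 1] conjI covering_exponent_cball_between) auto
  define Ll where "Ll = Limsup (at_right 0) fl"
  define Lu where "Lu = Liminf (at_right 0) fu"
  have lower: "Ll \<le> Liminf (at_right 0) fl \<and> Ll \<le> lower_box_dim x"
    unfolding Ll_def fl_def
    by (intro conjI) (rule ereal_ge_if_ge_all_less, erule tangential_Liminf_ge)+
  have upper: "Limsup (at_right 0) fu \<le> Lu \<and> upper_box_dim x \<le> Lu"
    unfolding Lu_def fu_def
    by (intro conjI) (rule ereal_le_if_le_all_greater, erule tangential_Limsup_le)+
  have "(fl \<longlongrightarrow> Ll) (at_right 0)"
    using lower Liminf_le_Limsup[of "at_right (0::real)" fl] unfolding Ll_def
    by (intro Liminf_eq_Limsup) auto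
  moreover have "(gl \<longlongrightarrow> Ll) (at_right 0)"
    using between by (intro tendsto_squeeze_half[OF calculation]) (auto elim: eventually_mono)
  then have "lower_tangential_dim x = Ll"
    unfolding lower_tangential_dim_def gl_def[symmetric] by (intro lim_imp_Liminf) simp_all
  moreover have "(fu \<longlongrightarrow> Lu) (at_right 0)"
    using upper Liminf_le_Limsup[of "at_right (0::real)" fu] unfolding Lu_def
    by (intro Liminf_eq_Limsup) auto
  moreover have "(gu \<longlongrightarrow> Lu) (at_right 0)"
    using between by (intro tendsto_squeeze_half[OF calculation(3)]) (auto elim: eventually_mono)
  then have "upper_tangential_dim x = Lu"
    unfolding upper_tangential_dim_def gu_def[symmetric] by (intro lim_imp_Limsup) simp_all
  ultimately show
    "((\<lambda>lam. Liminf (at_right 0) (\<lambda>r. covering_exponent lam (lam*r) (ball x r)))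
      \<longlongrightarrow> lower_tangential_dim x) (at_right 0)"
    "((\<lambda>lam. Limsup (at_right 0) (\<lambda>r. covering_exponent lam (lam*r) (ball x r)))
      \<longlongrightarrow> upper_tangential_dim x) (at_right 0)"
    "lower_tangential_dim x \<le> lower_box_dim x"
    "upper_box_dim x \<le> upper_tangential_dim x"
    using lower upper unfolding fl_def fu_def by auto
qed

lemma upper_tangential_dim_finite_if_condC:
  assumes "condC x"
  shows "upper_tangential_dim x < \<infinity>"
proof -
  have "Limsup (at_right 0) (\<lambda>r. ereal_of_enat (covnum (1/4 * r) (cball x r))) \<noteq> \<infinity>"
    using assms unfolding condC_def by (auto dest: spec[of _ "1/4"])
  then obtain B :: nat where "Limsup (at_right 0) (\<lambda>r. ereal_of_enat (covnum (1/4 * r) (cball x r))) < ereal B"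
    by (auto simp: less_PInf_Ex_of_nat)
  then have "\<forall>\<^sub>F r in at_right 0. ereal_of_enat (covnum (1/4 * r) (cball x r)) < ereal B"
    by (rule Limsup_lessD)
  then obtain b where "0 < b"
    and b: "\<And>r. 0 < r \<Longrightarrow> r < b \<Longrightarrow> ereal_of_enat (covnum (1/4 * r) (cball x r)) < ereal B"
    unfolding eventually_at_right_field by auto
  define r0 where "r0 = min a (b/2)"
  have r0: "0 < r0" "r0 \<le> a" unfolding r0_def using a_pos \<open>0 < b\<close> by auto
  define K where "K = max 1 (real B)"
  have K: "1 \<le> K" unfolding K_def by simp
  have bound: "ereal_of_enat (covnum (1/4 * r) (ball x r)) \<le> ereal K" if "0 < r" "r \<le> r0" for r
  proof -
    have "ereal_of_enat (covnum (1/4 * r) (ball x r)) \<le> ereal_of_enat (covnum (1/4 * r) (cball x r))"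
      by (simp add: covnum_mono ball_subset_cball)
    also have "\<dots> \<le> ereal B" using b[of r] that \<open>0 < b\<close> unfolding r0_def by simp
    also have "\<dots> \<le> ereal K" unfolding K_def by simp
    finally show ?thesis .
  qed
  have "1 * 1 \<le> c * K" using c_ge_1 K by (intro mult_mono) auto
  then have "0 \<le> ln (c*K) / ln (1/(2*(1/4)))" by simp
  moreover have "elog (covnum \<rho> (ball x R))
      \<le> ereal (ln (c*K) / ln (1/(2*(1/4))) * ln (R/\<rho>) + 2 * ln (c*K))"
    if "0 < \<rho>" "\<rho> \<le> R" "R \<le> r0" for \<rho> R
    by (rule elog_covnum_ball_upper[OF _ _ \<open>r0 \<le> a\<close> K bound that]) simp_all
  ultimately have "Limsup (at_right 0) (\<lambda>lam. Limsup (at_right 0) (\<lambda>r. covering_exponent lam (lam*r) (ball x r)))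
      \<le> ereal (ln (c*K) / ln (1/(2*(1/4))))"
    by (rule covering_exponents_le_if_elog_le(1)[OF \<open>0 < r0\<close>])
  then have "Limsup (at_right 0) (\<lambda>lam. Limsup (at_right 0) (\<lambda>r. covering_exponent lam (lam*r) (ball x r)))
      < \<infinity>" by (rule le_less_trans) simp
  moreover have "Limsup (at_right 0) (\<lambda>lam. Limsup (at_right 0) (\<lambda>r. covering_exponent lam (lam*r) (ball x r)))
      = upper_tangential_dim x"
    by (intro lim_imp_Limsup tangential_dimensions(2)) simp
  ultimately show "upper_tangential_dim x < \<infinity>" by simp
qed

end

theorem proposition4p6:
  fixes x :: "'a::metric_space" and c a :: real
  assumes "c \<ge> 1" and "0 < a" and "a \<le> 1"
    and hom: "\<And>r lam mu y z. 0 < r \<Longrightarrow> r \<le> a \<Longrightarrow> 0 < lam \<Longrightarrow> lam \<le> 1 \<Longrightarrow>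
       0 < mu \<Longrightarrow> mu \<le> 1 \<Longrightarrow> y \<in> ball x r \<Longrightarrow> z \<in> ball x r \<Longrightarrow>
       ereal_of_enat (covnum (lam * mu * r) (ball y (lam * r)))
         \<le> ereal c * ereal_of_enat (covnum (lam * mu * r) (ball z (lam * r)))"
  shows "(condC x \<longrightarrow>
            ((\<lambda>lam. Liminf (at_right 0) (\<lambda>r. elog (covnum (lam * r) (ball x r)) / ereal (ln (1 / lam))))
               \<longlongrightarrow> lower_tangential_dim x) (at_right 0)
          \<and> ((\<lambda>lam. Limsup (at_right 0) (\<lambda>r. elog (covnum (lam * r) (ball x r)) / ereal (ln (1 / lam))))
               \<longlongrightarrow> upper_tangential_dim x) (at_right 0))
       \<and> (condC x \<longrightarrow>
            lower_tangential_dim x \<le> lower_box_dim x \<and> lower_box_dim x \<le> upper_box_dim x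
            \<and> upper_box_dim x \<le> upper_tangential_dim x)
       \<and> (condC x \<longleftrightarrow> upper_tangential_dim x < \<infinity>)"
proof -
  interpret covering_homogeneous x c a
    by (rule covering_homogeneous.intro[OF assms(1,2) hom])
  show ?thesis
    using tangential_dimensions lower_box_dim_le_upper_box_dim
      upper_tangential_dim_finite_if_condC condC_if_upper_tangential_dim_finite
    by blast
qed

end
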